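(* Let $\alpha,\beta\in[0,1)$ and $\phi(t)=\beta t+(1-\beta)\min(1,t/(1-\alpha))$ for $t\in[0,1]$. Then for all $X\in\mathcal{M}^+$, \[ \|X\|_{\Lambda_\phi}=\|X\|_{TM_\phi}=\beta\,\mathbb{E}[X]+(1-\beta)\operatorname{CVar}_\alpha(X). \]
   Context: $\Omega=[0,1]$ with Lebesgue measure, $\mathcal{M}^+$ nonnegative measurable functions, $\mathbb{E}[X]=\int_0^1X\,d\omega$. $X^*(\omega)=\inf\{\lambda\ge0:\mu\{|X|>\lambda\}\le\omega\}$. For $X\ge0$, $\operatorname{CVar}_\alpha(X)=\frac{1}{1-\alpha}\int_0^{1-\alpha}X^*(\omega)\,d\omega$. For concave $\phi$ with $\phi(0)=0,\phi(1)=1$: Lorentz norm $\|X\|_{\Lambda_\phi}=X^*(0)\phi(0+)+\int_0^1X^*(\omega)\phi'(\omega)\,d\omega$; positive translation equivariant Marcinkiewicz norm $\|X\|_{TM_\phi}=\sup_{0<t<1}\{\frac{\phi(t)}{t}\int_0^tX^*\,d\omega+\frac{\phi(t)-1}{t-1}\int_t^1X^*\,d\omega\}$. *)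

theory Defs
  imports "HOL-Analysis.Analysis"
begin

text \<open>Omega = [0,1] with Lebesgue measure. Random variables are real-valued
functions; only their values on [0,1] matter.\<close>

definition Pspace :: "real measure" where
  "Pspace = lebesgue_on {0..1}"

definition nonneg_rv :: "(real \<Rightarrow> real) \<Rightarrow> bool" where
  "nonneg_rv X \<longleftrightarrow> X \<in> borel_measurable Pspace \<and> (\<forall>x\<in>{0..1}. 0 \<le> X x)"

definition expect :: "(real \<Rightarrow> real) \<Rightarrow> ennreal" where
  "expect X = (\<integral>\<^sup>+ x. ennreal (X x) \<partial>Pspace)"

text \<open>Decreasing rearrangement X*(w) = inf {lambda >= 0. mu{|X| > lambda} <= w},
valued in [0,\<infinity>] (inf of the empty set is \<infinity>).\<close>

definition rearr :: "(real \<Rightarrow> real) \<Rightarrow> real \<Rightarrow> ennreal" where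
  "rearr X w = Inf {lam :: ennreal. emeasure Pspace {x \<in> {0..1}. lam < ennreal \<bar>X x\<bar>} \<le> ennreal w}"

definition cvar :: "real \<Rightarrow> (real \<Rightarrow> real) \<Rightarrow> ennreal" where
  "cvar \<alpha> X = ennreal (1 / (1 - \<alpha>)) * (\<integral>\<^sup>+ w\<in>{0..1-\<alpha>}. rearr X w \<partial>lborel)"

definition lorentz_norm :: "(real \<Rightarrow> real) \<Rightarrow> (real \<Rightarrow> real) \<Rightarrow> ennreal" where
  "lorentz_norm \<phi> X =
     rearr X 0 * ennreal (Lim (at_right 0) \<phi>)
     + (\<integral>\<^sup>+ w\<in>{0<..<1}. rearr X w * ennreal (deriv \<phi> w) \<partial>lborel)"

definition tm_norm :: "(real \<Rightarrow> real) \<Rightarrow> (real \<Rightarrow> real) \<Rightarrow> ennreal" where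
  "tm_norm \<phi> X =
     (SUP t\<in>{0<..<1}. ennreal (\<phi> t / t) * (\<integral>\<^sup>+ w\<in>{0..t}. rearr X w \<partial>lborel)
        + ennreal ((\<phi> t - 1) / (t - 1)) * (\<integral>\<^sup>+ w\<in>{t..1}. rearr X w \<partial>lborel))"

end

theory Submission
  imports Defs
begin

text \<open>With \<open>c = 1 - \<alpha>\<close>, the function \<open>\<phi>\<close> is concave and piecewise linear, with slope
  \<open>a = \<beta> + (1 - \<beta>) / c\<close> on \<open>[0, c]\<close> and \<open>\<beta>\<close> on \<open>[c, 1]\<close>. Hence the Lorentz norm is
  \<open>a \<integral>\<^sub>0\<^sup>c X* + \<beta> \<integral>\<^sub>c\<^sup>1 X*\<close>, and so is the right-hand side, because \<open>X\<close> and \<open>X*\<close> are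
  equimeasurable and therefore \<open>E X = \<integral>\<^sub>0\<^sup>1 X*\<close> by the layer-cake formula.
  The supremum defining the Marcinkiewicz norm is attained at \<open>t = c\<close>: for any other \<open>t\<close> the
  secant slopes \<open>\<phi>(t) / t\<close> and \<open>(1 - \<phi>(t)) / (1 - t)\<close> arise from the slopes of \<open>\<phi>\<close> by moving
  weight across the kink \<open>c\<close> to the right, which cannot increase the integral of the
  decreasing function \<open>X*\<close>.\<close>

lemma borel_measurable_antimono_ennreal:
  fixes f :: "real \<Rightarrow> ennreal"
  assumes "antimono f"
  shows "f \<in> borel_measurable borel"
proof (rule borel_measurableI_greater)
  fix y
  have "is_interval {x. y < f x}"
    unfolding is_interval_1 using assms
    by (metis (mono_tags, lifting) antimonoD mem_Collect_eq order_less_le_trans)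
  then show "{x \<in> space borel. y < f x} \<in> sets borel"
    using real_interval_borel_measurable by simp
qed

lemma emeasure_lborel_atLeast: "emeasure lborel {a::real..} = \<infinity>"
proof (rule ccontr)
  assume "emeasure lborel {a..} \<noteq> \<infinity>"
  then obtain r where r: "emeasure lborel {a..} = ennreal r" "0 \<le> r"
    by (cases "emeasure lborel {a..}") auto
  have "emeasure lborel {a..a + r + 1} \<le> emeasure lborel {a..}"
    by (rule emeasure_mono) auto
  then show False using r by simp
qed

lemma nn_integral_lborel_indicator_less:
  "(\<integral>\<^sup>+ t. indicator {t. 0 \<le> t \<and> ennreal t < c} t \<partial>lborel) = c"
proof (cases c)
  case (real r)
  then have "{t. 0 \<le> t \<and> ennreal t < c} = {0..<r}"
    by (auto simp: ennreal_less_iff)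
  then show ?thesis using real by simp
next
  case top
  then have "{t. 0 \<le> t \<and> ennreal t < c} = {0..}" by auto
  then show ?thesis using top emeasure_lborel_atLeast by simp
qed

lemma nn_integral_layer_cake:
  assumes "sigma_finite_measure M" and [measurable]: "f \<in> borel_measurable M"
  shows "(\<integral>\<^sup>+ x. f x \<partial>M) = (\<integral>\<^sup>+ t\<in>{0..}. emeasure M {x \<in> space M. ennreal t < f x} \<partial>lborel)"
proof -
  interpret pair_sigma_finite M lborel
    by (simp add: pair_sigma_finite_def assms lborel.sigma_finite_measure_axioms)
  have "(\<integral>\<^sup>+ x. f x \<partial>M) = (\<integral>\<^sup>+ x. (\<integral>\<^sup>+ t. indicator {t. 0 \<le> t \<and> ennreal t < f x} t \<partial>lborel) \<partial>M)"
    by (simp add: nn_integral_lborel_indicator_less)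
  also have "\<dots> = (\<integral>\<^sup>+ t. (\<integral>\<^sup>+ x. indicator {t. 0 \<le> t \<and> ennreal t < f x} t \<partial>M) \<partial>lborel)"
    by (rule Fubini'[symmetric]) measurable
  also have "\<dots> = (\<integral>\<^sup>+ t. (\<integral>\<^sup>+ x. indicator {0..} t * indicator {x \<in> space M. ennreal t < f x} x \<partial>M) \<partial>lborel)"
    by (intro nn_integral_cong) (auto simp: indicator_def)
  also have "\<dots> = (\<integral>\<^sup>+ t\<in>{0..}. emeasure M {x \<in> space M. ennreal t < f x} \<partial>lborel)"
    by (intro nn_integral_cong) (simp add: nn_integral_cmult_indicator mult.commute)
  finally show ?thesis .
qed

lemma nn_integral_Icc_split:
  fixes f :: "real \<Rightarrow> ennreal"
  assumes [measurable]: "f \<in> borel_measurable borel" and "u \<le> v" "v \<le> w"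
  shows "(\<integral>\<^sup>+ x\<in>{u..w}. f x \<partial>lborel) = (\<integral>\<^sup>+ x\<in>{u..v}. f x \<partial>lborel) + (\<integral>\<^sup>+ x\<in>{v..w}. f x \<partial>lborel)"
proof -
  have "(\<integral>\<^sup>+ x\<in>{u..w}. f x \<partial>lborel) = (\<integral>\<^sup>+ x. f x * indicator {u..v} x + f x * indicator {v..w} x \<partial>lborel)"
    using AE_lborel_singleton[of v]
    by (intro nn_integral_cong_AE, eventually_elim) (use assms in \<open>auto simp: indicator_def\<close>)
  also have "\<dots> = (\<integral>\<^sup>+ x\<in>{u..v}. f x \<partial>lborel) + (\<integral>\<^sup>+ x\<in>{v..w}. f x \<partial>lborel)"
    by (rule nn_integral_add) measurable
  finally show ?thesis .
qed

lemma antimono_nn_integral_Icc_le: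
  fixes f :: "real \<Rightarrow> ennreal"
  assumes "antimono f" "u \<le> v"
  shows "(\<integral>\<^sup>+ x\<in>{u..v}. f x \<partial>lborel) \<le> ennreal (v - u) * f u"
proof -
  have "(\<integral>\<^sup>+ x\<in>{u..v}. f x \<partial>lborel) \<le> (\<integral>\<^sup>+ x. f u * indicator {u..v} x \<partial>lborel)"
    using assms(1) by (intro nn_integral_mono) (auto simp: indicator_def antimonoD)
  also have "\<dots> = ennreal (v - u) * f u"
    using assms(2) by (simp add: nn_integral_cmult_indicator mult.commute)
  finally show ?thesis .
qed

lemma antimono_nn_integral_Icc_ge:
  fixes f :: "real \<Rightarrow> ennreal"
  assumes "antimono f" "u \<le> v"
  shows "ennreal (v - u) * f v \<le> (\<integral>\<^sup>+ x\<in>{u..v}. f x \<partial>lborel)"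
proof -
  have "ennreal (v - u) * f v = (\<integral>\<^sup>+ x. f v * indicator {u..v} x \<partial>lborel)"
    using assms(2) by (simp add: nn_integral_cmult_indicator mult.commute)
  also have "\<dots> \<le> (\<integral>\<^sup>+ x\<in>{u..v}. f x \<partial>lborel)"
    using assms(1) by (intro nn_integral_mono) (auto simp: indicator_def antimonoD)
  finally show ?thesis .
qed

text \<open>By the balance condition, the right-hand side arises from the left one by moving the mass
  \<open>(m - b) (w - v)\<close> from \<open>[v, w]\<close> onto \<open>[u, v]\<close>; moving mass to the left can only increase the
  integral of an antitone function.\<close>

lemma antimono_nn_integral_shift_weight_left:
  fixes f :: "real \<Rightarrow> ennreal"
  assumes f: "antimono f" "f \<in> borel_measurable borel"
    and "u \<le> v" "v \<le> w" "0 \<le> b" "b \<le> m" "m \<le> a"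
    and balance: "(m - b) * (w - v) = (a - m) * (v - u)"
  shows "ennreal m * (\<integral>\<^sup>+ x\<in>{u..w}. f x \<partial>lborel)
    \<le> ennreal a * (\<integral>\<^sup>+ x\<in>{u..v}. f x \<partial>lborel) + ennreal b * (\<integral>\<^sup>+ x\<in>{v..w}. f x \<partial>lborel)"
proof -
  let ?L = "\<integral>\<^sup>+ x\<in>{u..v}. f x \<partial>lborel" and ?R = "\<integral>\<^sup>+ x\<in>{v..w}. f x \<partial>lborel"
  have "ennreal (m - b) * ?R \<le> ennreal (m - b) * (ennreal (w - v) * f v)"
    using antimono_nn_integral_Icc_le[OF f(1) \<open>v \<le> w\<close>] by (rule mult_left_mono) simp
  also have "\<dots> = ennreal ((m - b) * (w - v)) * f v"
    using assms(4,6) by (simp add: ennreal_mult mult.assoc)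
  also have "\<dots> = ennreal (a - m) * (ennreal (v - u) * f v)"
    using assms(3,7) by (simp add: balance ennreal_mult mult.assoc)
  also have "\<dots> \<le> ennreal (a - m) * ?L"
    using antimono_nn_integral_Icc_ge[OF f(1) \<open>u \<le> v\<close>] by (rule mult_left_mono) simp
  finally have shift: "ennreal (m - b) * ?R \<le> ennreal (a - m) * ?L" .
  have em: "ennreal m = ennreal b + ennreal (m - b)" and ea: "ennreal a = ennreal m + ennreal (a - m)"
    using assms(5-7) by (simp_all flip: ennreal_plus)
  have "ennreal m * (?L + ?R) = ennreal m * ?L + ennreal b * ?R + ennreal (m - b) * ?R"
    by (simp add: distrib_left add.assoc flip: distrib_right em)
  also have "\<dots> \<le> ennreal m * ?L + ennreal b * ?R + ennreal (a - m) * ?L"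
    using shift by (rule add_left_mono)
  also have "\<dots> = ennreal a * ?L + ennreal b * ?R"
    by (simp add: ea distrib_right add_ac)
  finally show ?thesis
    using nn_integral_Icc_split[OF f(2) \<open>u \<le> v\<close> \<open>v \<le> w\<close>] by simp
qed

lemma space_Pspace[simp]: "space Pspace = {0..1}"
  by (simp add: Pspace_def)

lemma finite_measure_Pspace: "finite_measure Pspace"
  unfolding Pspace_def by (rule finite_measure_lebesgue_on) auto

definition distribution_fun :: "(real \<Rightarrow> real) \<Rightarrow> ennreal \<Rightarrow> ennreal" where
  "distribution_fun X lam = emeasure Pspace {x \<in> {0..1}. lam < ennreal \<bar>X x\<bar>}"

lemma rearr_eq_Inf_distribution_fun: "rearr X w = Inf {lam. distribution_fun X lam \<le> ennreal w}"
  unfolding rearr_def distribution_fun_def ..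

lemma distribution_fun_le_1: "distribution_fun X lam \<le> 1"
proof -
  have "distribution_fun X lam \<le> emeasure Pspace (space Pspace)"
    unfolding distribution_fun_def by (rule emeasure_space)
  then show ?thesis
    by (simp add: Pspace_def emeasure_restrict_space)
qed

lemma antimono_rearr: "antimono (rearr X)"
  unfolding rearr_def by (intro antimonoI Inf_superset_mono) (auto intro: order_trans ennreal_leI)

lemma borel_measurable_rearr[measurable]: "rearr X \<in> borel_measurable borel"
  by (rule borel_measurable_antimono_ennreal[OF antimono_rearr])

context
  fixes X :: "real \<Rightarrow> real"
  assumes X[measurable]: "X \<in> borel_measurable Pspace"
begin

lemma antimono_distribution_fun: "antimono (distribution_fun X)"
proof (rule antimonoI)
  fix l1 l2 :: ennreal
  assume "l1 \<le> l2"
  have "{x \<in> space Pspace. l1 < ennreal \<bar>X x\<bar>} \<in> sets Pspace"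
    by measurable
  then show "distribution_fun X l2 \<le> distribution_fun X l1"
    unfolding distribution_fun_def using \<open>l1 \<le> l2\<close>
    by (intro emeasure_mono) (auto intro: le_less_trans)
qed

lemma distribution_fun_eq_SUP:
  assumes "0 \<le> t"
  shows "distribution_fun X (ennreal t) = (SUP n. distribution_fun X (ennreal (t + inverse (Suc n))))"
proof -
  define A where "A n = {x \<in> {0..1}. ennreal (t + inverse (Suc n)) < ennreal \<bar>X x\<bar>}" for n
  have "range A \<subseteq> sets Pspace"
  proof safe
    fix n
    have "{x \<in> space Pspace. ennreal (t + inverse (Suc n)) < ennreal \<bar>X x\<bar>} \<in> sets Pspace"
      by measurable
    then show "A n \<in> sets Pspace" by (simp add: A_def)
  qed
  moreover have "incseq A"
  proof (rule incseq_SucI)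
    fix n
    have "ennreal (t + inverse (Suc (Suc n))) \<le> ennreal (t + inverse (Suc n))"
      by (intro ennreal_leI) (simp add: field_simps)
    then show "A n \<subseteq> A (Suc n)"
      unfolding A_def by (auto simp del: ennreal_plus of_nat_Suc intro: le_less_trans)
  qed
  moreover have "(\<Union>n. A n) = {x \<in> {0..1}. ennreal t < ennreal \<bar>X x\<bar>}"
  proof (intro set_eqI iffI)
    fix x assume "x \<in> (\<Union>n. A n)"
    then obtain n where "x \<in> {0..1}" "t + inverse (Suc n) < \<bar>X x\<bar>"
      using assms by (auto simp del: ennreal_plus of_nat_Suc simp: A_def ennreal_less_iff)
    moreover have "0 < inverse (real (Suc n))" by simp
    ultimately have "x \<in> {0..1}" "t < \<bar>X x\<bar>" by linarith+
    then show "x \<in> {x \<in> {0..1}. ennreal t < ennreal \<bar>X x\<bar>}"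
      using assms by (simp add: ennreal_less_iff)
  next
    fix x assume x: "x \<in> {x \<in> {0..1}. ennreal t < ennreal \<bar>X x\<bar>}"
    then have "0 < \<bar>X x\<bar> - t" using assms by (simp add: ennreal_less_iff)
    then obtain n where "inverse (Suc n) < \<bar>X x\<bar> - t"
      using reals_Archimedean by blast
    then have "x \<in> A n"
      using x assms by (simp del: ennreal_plus add: A_def ennreal_less_iff)
    then show "x \<in> (\<Union>n. A n)" by blast
  qed
  ultimately show ?thesis
    using SUP_emeasure_incseq[of A Pspace] unfolding distribution_fun_def A_def by simp
qed

text \<open>The right-continuity of the distribution function makes the infimum defining \<open>rearr\<close>
  attained, so that \<open>rearr X\<close> is a generalized inverse of \<open>distribution_fun X\<close>.\<close>

lemma less_rearr_iff:
  assumes "0 \<le> t"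
  shows "ennreal t < rearr X w \<longleftrightarrow> ennreal w < distribution_fun X (ennreal t)"
proof
  assume "ennreal t < rearr X w"
  then show "ennreal w < distribution_fun X (ennreal t)"
    unfolding rearr_eq_Inf_distribution_fun by (meson Inf_lower mem_Collect_eq not_le)
next
  assume "ennreal w < distribution_fun X (ennreal t)"
  then obtain n where n: "ennreal w < distribution_fun X (ennreal (t + inverse (Suc n)))"
    using distribution_fun_eq_SUP[OF assms] by (auto simp: less_SUP_iff)
  have "ennreal (t + inverse (Suc n)) \<le> rearr X w"
    unfolding rearr_eq_Inf_distribution_fun
  proof (rule Inf_greatest)
    fix lam assume "lam \<in> {lam. distribution_fun X lam \<le> ennreal w}"
    with n show "ennreal (t + inverse (Suc n)) \<le> lam"
      using antimono_distribution_fun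
      by (metis (mono_tags) antimonoD dual_order.strict_trans2 linorder_le_cases mem_Collect_eq not_le)
  qed
  moreover have "ennreal t < ennreal (t + inverse (Suc n))"
    using assms by (simp del: ennreal_plus add: ennreal_less_iff)
  ultimately show "ennreal t < rearr X w" by simp
qed

lemma emeasure_less_rearr:
  assumes "0 \<le> t"
  shows "emeasure lborel {w. ennreal t < rearr X w * indicator {0..1} w} = distribution_fun X (ennreal t)"
proof -
  obtain m where m: "distribution_fun X (ennreal t) = ennreal m" "0 \<le> m" "m \<le> 1"
    using distribution_fun_le_1[of X "ennreal t"]
    by (cases "distribution_fun X (ennreal t)") (auto simp: top_unique)
  have "{w. ennreal t < rearr X w * indicator {0..1} w} = {0..<m}"
    using m by (auto simp: less_rearr_iff[OF assms] ennreal_less_iff indicator_def not_less)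
  then show ?thesis using m by simp
qed

lemma expect_eq_nn_integral_rearr:
  assumes "\<And>x. x \<in> {0..1} \<Longrightarrow> 0 \<le> X x"
  shows "expect X = (\<integral>\<^sup>+ w\<in>{0..1}. rearr X w \<partial>lborel)"
proof -
  interpret finite_measure Pspace by (rule finite_measure_Pspace)
  have "expect X = (\<integral>\<^sup>+ t\<in>{0..}. emeasure Pspace {x \<in> space Pspace. ennreal t < ennreal (X x)} \<partial>lborel)"
    unfolding expect_def by (rule nn_integral_layer_cake) (auto simp: sigma_finite_measure_axioms)
  also have "\<dots> = (\<integral>\<^sup>+ t\<in>{0..}. emeasure lborel {w \<in> space lborel. ennreal t < rearr X w * indicator {0..1} w} \<partial>lborel)"
  proof (intro nn_integral_cong)
    fix t :: real
    have "{x \<in> space Pspace. ennreal t < ennreal (X x)} = {x \<in> {0..1}. ennreal t < ennreal \<bar>X x\<bar>}"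
      using assms by auto
    then show "emeasure Pspace {x \<in> space Pspace. ennreal t < ennreal (X x)} * indicator {0..} t =
        emeasure lborel {w \<in> space lborel. ennreal t < rearr X w * indicator {0..1} w} * indicator {0..} t"
      by (cases "0 \<le> t") (simp_all add: emeasure_less_rearr distribution_fun_def)
  qed
  also have "\<dots> = (\<integral>\<^sup>+ w\<in>{0..1}. rearr X w \<partial>lborel)"
    by (rule nn_integral_layer_cake[symmetric]) (auto simp: lborel.sigma_finite_measure_axioms)
  finally show ?thesis .
qed

end

definition mix_distortion :: "real \<Rightarrow> real \<Rightarrow> real \<Rightarrow> real" where
  "mix_distortion \<beta> c t = \<beta> * t + (1 - \<beta>) * min 1 (t / c)"

definition marcinkiewicz_term :: "(real \<Rightarrow> real) \<Rightarrow> (real \<Rightarrow> ennreal) \<Rightarrow> real \<Rightarrow> ennreal" where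
  "marcinkiewicz_term \<phi> f t =
     ennreal (\<phi> t / t) * (\<integral>\<^sup>+ w\<in>{0..t}. f w \<partial>lborel)
     + ennreal ((\<phi> t - 1) / (t - 1)) * (\<integral>\<^sup>+ w\<in>{t..1}. f w \<partial>lborel)"

lemma tm_norm_eq_SUP_marcinkiewicz_term:
  "tm_norm \<phi> X = (SUP t\<in>{0<..<1}. marcinkiewicz_term \<phi> (rearr X) t)"
  unfolding tm_norm_def marcinkiewicz_term_def ..

lemma lorentz_norm_two_slopes:
  assumes "Lim (at_right 0) \<phi> = 0" "0 \<le> c" "c \<le> 1"
    and "\<And>w. 0 < w \<Longrightarrow> w < c \<Longrightarrow> deriv \<phi> w = a"
    and "\<And>w. c < w \<Longrightarrow> w < 1 \<Longrightarrow> deriv \<phi> w = b"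
  shows "lorentz_norm \<phi> X
    = ennreal a * (\<integral>\<^sup>+ w\<in>{0..c}. rearr X w \<partial>lborel) + ennreal b * (\<integral>\<^sup>+ w\<in>{c..1}. rearr X w \<partial>lborel)"
proof -
  have "(\<integral>\<^sup>+ w\<in>{0<..<1}. rearr X w * ennreal (deriv \<phi> w) \<partial>lborel)
      = (\<integral>\<^sup>+ w. ennreal a * (rearr X w * indicator {0..c} w) + ennreal b * (rearr X w * indicator {c..1} w) \<partial>lborel)"
    using AE_lborel_singleton[of 0] AE_lborel_singleton[of c] AE_lborel_singleton[of 1]
    by (intro nn_integral_cong_AE, eventually_elim)
      (use assms in \<open>auto simp: indicator_def mult.commute\<close>)
  also have "\<dots> = ennreal a * (\<integral>\<^sup>+ w\<in>{0..c}. rearr X w \<partial>lborel) + ennreal b * (\<integral>\<^sup>+ w\<in>{c..1}. rearr X w \<partial>lborel)"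
    by (subst nn_integral_add) (auto simp: nn_integral_cmult)
  finally show ?thesis
    unfolding lorentz_norm_def assms(1) by simp
qed

context
  fixes \<beta> c :: real
  assumes \<beta>: "0 \<le> \<beta>" "\<beta> \<le> 1" and c: "0 < c" "c \<le> 1"
begin

lemma mix_distortion_below:
  "t \<le> c \<Longrightarrow> mix_distortion \<beta> c t = (\<beta> + (1 - \<beta>) / c) * t"
  using c by (simp add: mix_distortion_def field_simps)

lemma mix_distortion_above:
  "c \<le> t \<Longrightarrow> mix_distortion \<beta> c t = \<beta> * t + (1 - \<beta>)"
  using c by (simp add: mix_distortion_def field_simps)

lemma slope_mix_distortion_ge_1: "1 \<le> \<beta> + (1 - \<beta>) / c"
proof -
  have "0 \<le> (1 - \<beta>) * (1 - c)"
    using \<beta> c by simp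
  then have "1 - \<beta> \<le> (1 - \<beta>) / c"
    using c by (simp add: field_simps algebra_simps)
  then show ?thesis by simp
qed

lemma Lim_at_right_0_mix_distortion: "Lim (at_right 0) (mix_distortion \<beta> c) = 0"
proof (rule tendsto_Lim)
  have "((\<lambda>t. \<beta> * t + (1 - \<beta>) * min 1 (t / c)) \<longlongrightarrow> \<beta> * 0 + (1 - \<beta>) * min 1 (0 / c)) (at_right 0)"
    by (intro tendsto_intros) (use c in auto)
  then show "(mix_distortion \<beta> c \<longlongrightarrow> 0) (at_right 0)"
    by (simp add: mix_distortion_def[abs_def])
qed simp

lemma deriv_mix_distortion_below:
  assumes "w < c"
  shows "deriv (mix_distortion \<beta> c) w = \<beta> + (1 - \<beta>) / c"
proof (rule DERIV_imp_deriv)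
  have "((\<lambda>t. (\<beta> + (1 - \<beta>) / c) * t) has_field_derivative \<beta> + (1 - \<beta>) / c) (at w)"
    by (auto intro!: derivative_eq_intros)
  then show "(mix_distortion \<beta> c has_field_derivative \<beta> + (1 - \<beta>) / c) (at w)"
    by (rule has_field_derivative_transform_within_open[where S="{..<c}"])
      (use assms in \<open>auto simp: mix_distortion_below\<close>)
qed

lemma deriv_mix_distortion_above:
  assumes "c < w"
  shows "deriv (mix_distortion \<beta> c) w = \<beta>"
proof (rule DERIV_imp_deriv)
  have "((\<lambda>t. \<beta> * t + (1 - \<beta>)) has_field_derivative \<beta>) (at w)"
    by (auto intro!: derivative_eq_intros)
  then show "(mix_distortion \<beta> c has_field_derivative \<beta>) (at w)"
    by (rule has_field_derivative_transform_within_open[where S="{c<..}"])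
      (use assms in \<open>auto simp: mix_distortion_above\<close>)
qed

lemma lorentz_norm_mix_distortion:
  "lorentz_norm (mix_distortion \<beta> c) X
    = ennreal (\<beta> + (1 - \<beta>) / c) * (\<integral>\<^sup>+ w\<in>{0..c}. rearr X w \<partial>lborel)
      + ennreal \<beta> * (\<integral>\<^sup>+ w\<in>{c..1}. rearr X w \<partial>lborel)"
  using c by (intro lorentz_norm_two_slopes Lim_at_right_0_mix_distortion
      deriv_mix_distortion_below deriv_mix_distortion_above) auto

context
  fixes f :: "real \<Rightarrow> ennreal"
  assumes f: "antimono f" "f \<in> borel_measurable borel"
begin

lemma marcinkiewicz_term_mix_distortion_le_below:
  assumes t: "0 < t" "t < 1" "t \<le> c"
  shows "marcinkiewicz_term (mix_distortion \<beta> c) f t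
    \<le> ennreal (\<beta> + (1 - \<beta>) / c) * (\<integral>\<^sup>+ w\<in>{0..c}. f w \<partial>lborel) + ennreal \<beta> * (\<integral>\<^sup>+ w\<in>{c..1}. f w \<partial>lborel)"
proof -
  define a where "a = \<beta> + (1 - \<beta>) / c"
  define m where "m = (1 - a * t) / (1 - t)"
  have "mix_distortion \<beta> c t / t = a" "(mix_distortion \<beta> c t - 1) / (t - 1) = m"
    using t by (simp_all add: mix_distortion_below a_def m_def field_simps)
  then have "marcinkiewicz_term (mix_distortion \<beta> c) f t
      = ennreal a * (\<integral>\<^sup>+ w\<in>{0..t}. f w \<partial>lborel) + ennreal m * (\<integral>\<^sup>+ w\<in>{t..1}. f w \<partial>lborel)"
    by (simp add: marcinkiewicz_term_def)
  moreover have "\<beta> \<le> m"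
  proof -
    have "(1 - \<beta>) * t \<le> (1 - \<beta>) * c"
      using \<beta> t by (intro mult_left_mono) auto
    then show ?thesis
      using c t by (simp add: m_def a_def field_simps)
  qed
  moreover have "m \<le> a"
    using t slope_mix_distortion_ge_1 by (simp add: m_def field_simps flip: a_def)
  moreover have "(m - \<beta>) * (1 - c) = (a - m) * (c - t)"
    using c t by (simp add: m_def a_def field_simps)
  ultimately have "marcinkiewicz_term (mix_distortion \<beta> c) f t
      \<le> ennreal a * (\<integral>\<^sup>+ w\<in>{0..t}. f w \<partial>lborel)
        + (ennreal a * (\<integral>\<^sup>+ w\<in>{t..c}. f w \<partial>lborel) + ennreal \<beta> * (\<integral>\<^sup>+ w\<in>{c..1}. f w \<partial>lborel))"
    using \<beta> c t by (simp only:) (intro add_left_mono antimono_nn_integral_shift_weight_left f; simp)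
  also have "\<dots> = ennreal a * (\<integral>\<^sup>+ w\<in>{0..c}. f w \<partial>lborel) + ennreal \<beta> * (\<integral>\<^sup>+ w\<in>{c..1}. f w \<partial>lborel)"
    using nn_integral_Icc_split[OF f(2), of 0 t c] t by (simp add: distrib_left add_ac)
  finally show ?thesis unfolding a_def .
qed

lemma marcinkiewicz_term_mix_distortion_le_above:
  assumes t: "t < 1" "c \<le> t"
  shows "marcinkiewicz_term (mix_distortion \<beta> c) f t
    \<le> ennreal (\<beta> + (1 - \<beta>) / c) * (\<integral>\<^sup>+ w\<in>{0..c}. f w \<partial>lborel) + ennreal \<beta> * (\<integral>\<^sup>+ w\<in>{c..1}. f w \<partial>lborel)"
proof -
  define a where "a = \<beta> + (1 - \<beta>) / c"
  define p where "p = (\<beta> * t + (1 - \<beta>)) / t"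
  have "mix_distortion \<beta> c t / t = p" "(mix_distortion \<beta> c t - 1) / (t - 1) = \<beta>"
    using c t by (simp_all add: mix_distortion_above p_def field_simps)
  then have "marcinkiewicz_term (mix_distortion \<beta> c) f t
      = ennreal p * (\<integral>\<^sup>+ w\<in>{0..t}. f w \<partial>lborel) + ennreal \<beta> * (\<integral>\<^sup>+ w\<in>{t..1}. f w \<partial>lborel)"
    by (simp add: marcinkiewicz_term_def)
  moreover have "\<beta> \<le> p"
    using c t \<beta> by (simp add: p_def field_simps)
  moreover have "p \<le> a"
  proof -
    have "(1 - \<beta>) * c \<le> (1 - \<beta>) * t"
      using \<beta> t by (intro mult_left_mono) auto
    then show ?thesis
      using c t by (simp add: p_def a_def field_simps)
  qed
  moreover have "(p - \<beta>) * (t - c) = (a - p) * (c - 0)"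
    using c t by (simp add: p_def a_def field_simps)
  ultimately have "marcinkiewicz_term (mix_distortion \<beta> c) f t
      \<le> (ennreal a * (\<integral>\<^sup>+ w\<in>{0..c}. f w \<partial>lborel) + ennreal \<beta> * (\<integral>\<^sup>+ w\<in>{c..t}. f w \<partial>lborel))
        + ennreal \<beta> * (\<integral>\<^sup>+ w\<in>{t..1}. f w \<partial>lborel)"
    using \<beta> c t by (simp only:) (intro add_right_mono antimono_nn_integral_shift_weight_left f; simp)
  also have "\<dots> = ennreal a * (\<integral>\<^sup>+ w\<in>{0..c}. f w \<partial>lborel) + ennreal \<beta> * (\<integral>\<^sup>+ w\<in>{c..1}. f w \<partial>lborel)"
    using nn_integral_Icc_split[OF f(2), of c t 1] t by (simp add: distrib_left add_ac)
  finally show ?thesis unfolding a_def .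
qed

lemma SUP_marcinkiewicz_term_mix_distortion:
  "(SUP t\<in>{0<..<1}. marcinkiewicz_term (mix_distortion \<beta> c) f t)
    = ennreal (\<beta> + (1 - \<beta>) / c) * (\<integral>\<^sup>+ w\<in>{0..c}. f w \<partial>lborel) + ennreal \<beta> * (\<integral>\<^sup>+ w\<in>{c..1}. f w \<partial>lborel)"
    (is "?S = ?T")
proof (rule antisym)
  show "?S \<le> ?T"
    using marcinkiewicz_term_mix_distortion_le_below marcinkiewicz_term_mix_distortion_le_above
    by (intro SUP_least) (meson greaterThanLessThan_iff linorder_le_cases)
  show "?T \<le> ?S"
  proof (cases "c < 1")
    case True
    have "mix_distortion \<beta> c c / c = \<beta> + (1 - \<beta>) / c"
      using c by (simp add: mix_distortion_below)
    moreover have "(mix_distortion \<beta> c c - 1) / (c - 1) = \<beta>"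
      using True by (simp add: mix_distortion_above field_simps)
    ultimately have "marcinkiewicz_term (mix_distortion \<beta> c) f c = ?T"
      by (simp add: marcinkiewicz_term_def)
    then show ?thesis
      using c True by (intro SUP_upper2[of c]) auto
  next
    case False
    then have "c = 1" using c by simp
    have "mix_distortion \<beta> c (1/2) = 1/2"
      by (simp add: mix_distortion_def \<open>c = 1\<close> field_simps)
    then have "marcinkiewicz_term (mix_distortion \<beta> c) f (1/2) = (\<integral>\<^sup>+ w\<in>{0..1}. f w \<partial>lborel)"
      using nn_integral_Icc_split[OF f(2), of 0 "1/2" 1] by (simp add: marcinkiewicz_term_def)
    moreover have "(\<integral>\<^sup>+ w\<in>{1..1}. f w \<partial>lborel) = 0"
      using antimono_nn_integral_Icc_le[OF f(1), of 1 1] by simp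
    ultimately have "marcinkiewicz_term (mix_distortion \<beta> c) f (1/2) = ?T"
      by (simp add: \<open>c = 1\<close>)
    then show ?thesis
      by (intro SUP_upper2[of "1/2"]) auto
  qed
qed

end

lemma tm_norm_mix_distortion:
  "tm_norm (mix_distortion \<beta> c) X
    = ennreal (\<beta> + (1 - \<beta>) / c) * (\<integral>\<^sup>+ w\<in>{0..c}. rearr X w \<partial>lborel)
      + ennreal \<beta> * (\<integral>\<^sup>+ w\<in>{c..1}. rearr X w \<partial>lborel)"
  unfolding tm_norm_eq_SUP_marcinkiewicz_term
  by (rule SUP_marcinkiewicz_term_mix_distortion[OF antimono_rearr borel_measurable_rearr])

end

theorem theorem21:
  fixes \<alpha> \<beta> :: real and X :: "real \<Rightarrow> real"
  assumes "0 \<le> \<alpha>" "\<alpha> < 1" "0 \<le> \<beta>" "\<beta> < 1"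
    and "nonneg_rv X"
  defines "\<phi> \<equiv> (\<lambda>t. \<beta> * t + (1 - \<beta>) * min 1 (t / (1 - \<alpha>)))"
  shows "lorentz_norm \<phi> X = tm_norm \<phi> X
     \<and> tm_norm \<phi> X = ennreal \<beta> * expect X + ennreal (1 - \<beta>) * cvar \<alpha> X"
proof -
  define c where "c = 1 - \<alpha>"
  have c: "0 < c" "c \<le> 1" and \<phi>_eq: "\<phi> = mix_distortion \<beta> c"
    using assms(1,2) by (auto simp: c_def \<phi>_def mix_distortion_def)
  define A where "A = (\<integral>\<^sup>+ w\<in>{0..c}. rearr X w \<partial>lborel)"
  define B where "B = (\<integral>\<^sup>+ w\<in>{c..1}. rearr X w \<partial>lborel)"
  have "expect X = (\<integral>\<^sup>+ w\<in>{0..1}. rearr X w \<partial>lborel)"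
    using assms(5) unfolding nonneg_rv_def by (intro expect_eq_nn_integral_rearr) auto
  also have "\<dots> = A + B"
    unfolding A_def B_def using c by (intro nn_integral_Icc_split) auto
  finally have expect_eq: "expect X = A + B" .
  have "ennreal (1 - \<beta>) * ennreal (1 / c) = ennreal ((1 - \<beta>) / c)"
    using assms(4) c by (simp flip: ennreal_mult)
  then have cvar_eq: "ennreal (1 - \<beta>) * cvar \<alpha> X = ennreal ((1 - \<beta>) / c) * A"
    unfolding cvar_def A_def c_def by (simp flip: mult.assoc)
  have slope_eq: "ennreal (\<beta> + (1 - \<beta>) / c) = ennreal \<beta> + ennreal ((1 - \<beta>) / c)"
    using assms(3,4) c by (intro ennreal_plus) auto
  have "ennreal \<beta> * expect X + ennreal (1 - \<beta>) * cvar \<alpha> X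
      = ennreal (\<beta> + (1 - \<beta>) / c) * A + ennreal \<beta> * B"
    unfolding cvar_eq expect_eq slope_eq by (simp add: distrib_left distrib_right add_ac)
  then show ?thesis
    unfolding \<phi>_eq A_def B_def
    using lorentz_norm_mix_distortion tm_norm_mix_distortion assms(3,4) c by simp
qed

end
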